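(* Let $0\le t_0<R/2$ and $\theta_0\in[0,2\pi)$, and suppose $V\cap\mathcal A(t_0,\theta_0)=\emptyset$. Let $v,w\in V$ with $t_v,t_w\le t_0$ and angles satisfying $\theta_v<\theta_0<\theta_w$ with $\theta_w-\theta_v\le\pi$. Then $|\theta_v-\theta_w|>\theta^R(t_v,t_w)$; in particular $v$ and $w$ are not joined by an edge.
   Context: Model $\mathrm{Poi}_{\alpha,\nu}(n)$: fix $\alpha>1$, $\nu>0$, $R=2\log(n/\nu)$. Points are in polar coordinates $(r,\theta)$ of the native representation of the hyperbolic plane, with $\cosh d_h(u,u')=\cosh r_u\cosh r_{u'}-\sinh r_u\sinh r_{u'}\cos(\theta_u-\theta_{u'})$. $V$ is a Poisson point process on $\{r<R\}$ with intensity $\nu e^{R/2}\frac{1}{2\pi}\frac{\alpha\sinh(\alpha r)}{\cosh(\alpha R)-1}\,dr\,d\theta$; distinct $u,u'\in V$ are adjacent iff $d_h(u,u')\le R$. For a point $v$ write $t_v=R-r_v$ and identify $v$ with $(t_v,\theta_v)$. Angles are taken modulo $2\pi$ and $|\theta-\theta'|$ denotes circular distance. For $t_1,t_2\in[0,R/2]$, $\theta^R(t_1,t_2)=\arccos\bigl(\frac{\cosh(R-t_1)\cosh(R-t_2)-\cosh R}{\sinh(R-t_1)\sinh(R-t_2)}\bigr)$; vertices $u,v$ with $t_u,t_v\le R/2$ are adjacent iff $|\theta_u-\theta_v|\le\theta^R(t_u,t_v)$. Separation zone: for $0\le t_0<R/2$, $\theta_0\in[0,2\pi)$, $\mathcal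 A(t_0,\theta_0)=\{(t,\theta):0\le t\le t_0,\ |\theta-\theta_0|\le\theta^R(t,t)\}$. *)

theory Defs
  imports "HOL-Analysis.Analysis"
begin

definition hrad :: "nat \<Rightarrow> real \<Rightarrow> real" where
  "hrad n \<nu> = 2 * ln (real n / \<nu>)"

definition circ_dist :: "real \<Rightarrow> real \<Rightarrow> real" where
  "circ_dist a b =
     (let d = (a - b) - 2 * pi * of_int \<lfloor>(a - b) / (2 * pi)\<rfloor> in min d (2 * pi - d))"

definition hyp_dist :: "real \<Rightarrow> real \<Rightarrow> real \<Rightarrow> real \<Rightarrow> real" where
  "hyp_dist r1 th1 r2 th2 =
     arcosh (cosh r1 * cosh r2 - sinh r1 * sinh r2 * cos (th1 - th2))"

text \<open>A vertex is identified with (t, theta), where t = R - r.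
  Two distinct vertices are adjacent iff their hyperbolic distance is at most R.\<close>
definition adjacent :: "real \<Rightarrow> real \<times> real \<Rightarrow> real \<times> real \<Rightarrow> bool" where
  "adjacent R u u' \<longleftrightarrow> u \<noteq> u' \<and>
     hyp_dist (R - fst u) (snd u) (R - fst u') (snd u') \<le> R"

definition thetaR :: "real \<Rightarrow> real \<Rightarrow> real \<Rightarrow> real" where
  "thetaR R t1 t2 =
     arccos ((cosh (R - t1) * cosh (R - t2) - cosh R) / (sinh (R - t1) * sinh (R - t2)))"

definition sep_zone :: "real \<Rightarrow> real \<Rightarrow> real \<Rightarrow> (real \<times> real) set" where
  "sep_zone R t0 \<theta>0 = {(t, \<theta>). 0 \<le> t \<and> t \<le> t0 \<and> circ_dist \<theta> \<theta>0 \<le> thetaR R t t}"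

end

theory Submission
  imports Defs
begin

text \<open>Both vertices lie outside the separation zone, so each is more than its own
  diagonal angle thetaR t t away from \<theta>0, on opposite sides of it. As thetaR is
  decreasing in each argument, thetaR tv tw is at most the sum of the two diagonal
  angles, which is less than \<theta>w - \<theta>v. Since cosine is decreasing on [0, pi], this
  angular gap pushes the hyperbolic distance above R.\<close>

lemma circ_dist_eq_abs:
  assumes "\<bar>a - b\<bar> \<le> pi"
  shows "circ_dist a b = \<bar>a - b\<bar>"
proof (cases "a - b \<ge> 0")
  case True
  moreover have "a - b < 2 * pi" using assms pi_gt_zero by linarith
  ultimately have "\<lfloor>(a - b) / (2 * pi)\<rfloor> = 0"
    using pi_gt_zero by (subst floor_eq_iff) (auto simp: field_simps)
  then show ?thesis using True assms by (simp add: circ_dist_def Let_def)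
next
  case False
  then have "\<lfloor>(a - b) / (2 * pi)\<rfloor> = -1"
    using assms pi_gt_zero by (subst floor_eq_iff) (auto simp: field_simps)
  then show ?thesis using False assms by (simp add: circ_dist_def Let_def)
qed

definition critical_cos :: "real \<Rightarrow> real \<Rightarrow> real \<Rightarrow> real" where
  "critical_cos R a b = (cosh a * cosh b - cosh R) / (sinh a * sinh b)"

lemma thetaR_eq_arccos_critical_cos: "thetaR R t1 t2 = arccos (critical_cos R (R - t1) (R - t2))"
  by (simp add: thetaR_def critical_cos_def)

lemma critical_cos_bounds:
  assumes "0 < a" "0 < b" "a < R" "b < R" "R \<le> a + b"
  shows "-1 \<le> critical_cos R a b" "critical_cos R a b \<le> 1"
proof -
  have pos: "sinh a * sinh b > 0" using assms by simp
  have "cosh R \<le> cosh (a + b)" using assms by (subst cosh_real_nonneg_le_iff) auto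
  then have lower: "- (sinh a * sinh b) \<le> cosh a * cosh b - cosh R" by (simp add: cosh_add)
  have "cosh (a - b) = cosh \<bar>a - b\<bar>" by (cases "b \<le> a") (simp_all add: abs_if)
  also have "\<dots> \<le> cosh R" using assms by (subst cosh_real_nonneg_le_iff) auto
  finally have upper: "cosh a * cosh b - cosh R \<le> sinh a * sinh b" by (simp add: cosh_diff)
  show "-1 \<le> critical_cos R a b" "critical_cos R a b \<le> 1"
    using lower upper pos by (simp_all add: critical_cos_def divide_simps)
qed

lemma critical_cos_mono:
  assumes "0 < b" "b \<le> a"
  shows "critical_cos R b b \<le> critical_cos R a b"
proof -
  define d where "d = a - b"
  have a: "a = b + d" and "d \<ge> 0" using assms by (auto simp: d_def)
  have sb: "sinh b > 0" and sa: "sinh a > 0" and "sinh d \<ge> 0" using assms \<open>d \<ge> 0\<close> by auto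
  have "cosh d \<ge> 1" "cosh R \<ge> 1" "cosh b \<ge> 1" by (auto simp: cosh_real_ge_1)
  have sq: "cosh b * cosh b - sinh b * sinh b = 1"
    using cosh_square_eq[of b] by (simp add: power2_eq_square)
  have "(cosh a * cosh b - cosh R) * sinh b - (cosh b * cosh b - cosh R) * sinh a
      = cosh b * sinh d * (cosh R - 1) + cosh R * sinh b * (cosh d - 1)
        - cosh b * sinh d * (cosh b * cosh b - sinh b * sinh b - 1)"
    unfolding a by (simp add: sinh_add cosh_add algebra_simps)
  also have "\<dots> = cosh b * sinh d * (cosh R - 1) + cosh R * sinh b * (cosh d - 1)"
    using sq by simp
  also have "\<dots> \<ge> 0"
    using \<open>sinh d \<ge> 0\<close> \<open>cosh d \<ge> 1\<close> \<open>cosh R \<ge> 1\<close> \<open>cosh b \<ge> 1\<close> sb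
    by (intro add_nonneg_nonneg mult_nonneg_nonneg) auto
  finally have "(cosh b * cosh b - cosh R) * sinh a \<le> (cosh a * cosh b - cosh R) * sinh b"
    by simp
  then show ?thesis using sa sb by (simp add: critical_cos_def divide_simps mult.commute)
qed

lemma thetaR_commute: "thetaR R t1 t2 = thetaR R t2 t1"
  unfolding thetaR_def by (simp add: mult.commute)

lemma thetaR_nonneg:
  assumes "0 < t1" "0 < t2" "t1 < R / 2" "t2 < R / 2"
  shows "0 \<le> thetaR R t1 t2"
  unfolding thetaR_eq_arccos_critical_cos
  using critical_cos_bounds[of "R - t1" "R - t2" R] assms by (intro arccos_lbound) auto

lemma thetaR_le_diagonal:
  assumes "0 < t1" "t1 \<le> t2" "t2 < R / 2"
  shows "thetaR R t1 t2 \<le> thetaR R t2 t2"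
  unfolding thetaR_eq_arccos_critical_cos
proof (rule arccos_le_arccos)
  show "-1 \<le> critical_cos R (R - t2) (R - t2)"
    using critical_cos_bounds[of "R - t2" "R - t2" R] assms by auto
  show "critical_cos R (R - t2) (R - t2) \<le> critical_cos R (R - t1) (R - t2)"
    using critical_cos_mono[of "R - t2" "R - t1" R] assms by auto
  show "critical_cos R (R - t1) (R - t2) \<le> 1"
    using critical_cos_bounds[of "R - t1" "R - t2" R] assms by auto
qed

lemma thetaR_le_diagonal_sum:
  assumes "0 < t1" "0 < t2" "t1 < R / 2" "t2 < R / 2"
  shows "thetaR R t1 t2 \<le> thetaR R t1 t1 + thetaR R t2 t2"
proof (cases "t1 \<le> t2")
  case True
  then show ?thesis
    using thetaR_le_diagonal[of t1 t2 R] thetaR_nonneg[of t1 t1 R] assms by linarith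
next
  case False
  then show ?thesis
    using thetaR_le_diagonal[of t2 t1 R] thetaR_nonneg[of t2 t2 R] thetaR_commute[of R t1 t2] assms
    by linarith
qed

lemma hyp_dist_gt_if_angle_gt_thetaR:
  assumes "0 < t1" "0 < t2" "t1 < R / 2" "t2 < R / 2"
    and "\<bar>\<theta>1 - \<theta>2\<bar> \<le> pi" "thetaR R t1 t2 < \<bar>\<theta>1 - \<theta>2\<bar>"
  shows "R < hyp_dist (R - t1) \<theta>1 (R - t2) \<theta>2"
proof -
  define a b where "a = R - t1" and "b = R - t2"
  define c where "c = critical_cos R a b"
  have c_bounds: "-1 \<le> c" "c \<le> 1"
    using critical_cos_bounds[of a b R] assms by (auto simp: c_def a_def b_def)
  have sab: "sinh a * sinh b > 0" using assms by (simp add: a_def b_def)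
  have "cos \<bar>\<theta>1 - \<theta>2\<bar> < cos (arccos c)"
    using assms(5,6) c_bounds arccos_bounded[of c]
    by (subst cos_mono_less_eq) (auto simp: thetaR_eq_arccos_critical_cos c_def a_def b_def)
  moreover have "cos \<bar>\<theta>1 - \<theta>2\<bar> = cos (\<theta>1 - \<theta>2)"
    by (metis abs_of_nonneg abs_of_nonpos cos_minus minus_diff_eq nle_le)
  ultimately have "cos (\<theta>1 - \<theta>2) < c" using c_bounds by simp
  then have "sinh a * sinh b * cos (\<theta>1 - \<theta>2) < sinh a * sinh b * c"
    using sab by (rule mult_strict_left_mono)
  also have "sinh a * sinh b * c = cosh a * cosh b - cosh R"
    unfolding c_def critical_cos_def times_divide_eq_right
    using sab by (intro nonzero_mult_div_cancel_left) linarith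
  finally have "cosh R < cosh a * cosh b - sinh a * sinh b * cos (\<theta>1 - \<theta>2)" by simp
  then have "arcosh (cosh R) < hyp_dist a \<theta>1 b \<theta>2"
    unfolding hyp_dist_def using cosh_real_ge_1[of R] by (subst arcosh_less_iff_real) auto
  moreover have "arcosh (cosh R) = R" using assms by (simp add: arcosh_cosh_real)
  ultimately show ?thesis by (simp add: a_def b_def)
qed

lemma diagonal_thetaR_lt_if_notin_sep_zone:
  assumes "(t, \<theta>) \<notin> sep_zone R t0 \<theta>0" "0 < t" "t \<le> t0" "\<bar>\<theta> - \<theta>0\<bar> \<le> pi"
  shows "thetaR R t t < \<bar>\<theta> - \<theta>0\<bar>"
  using assms by (auto simp: sep_zone_def circ_dist_eq_abs)

theorem mainTheorem3:
  fixes n :: nat and \<nu> R t0 \<theta>0 tv \<theta>v tw \<theta>w :: real and V :: "(real \<times> real) set"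
  assumes "\<nu> > 0"
    and "R = hrad n \<nu>"
    and "V \<subseteq> {(t, \<theta>). 0 < t \<and> t \<le> R \<and> 0 \<le> \<theta> \<and> \<theta> < 2 * pi}"
    and "0 \<le> t0" and "t0 < R / 2"
    and "0 \<le> \<theta>0" and "\<theta>0 < 2 * pi"
    and "V \<inter> sep_zone R t0 \<theta>0 = {}"
    and "(tv, \<theta>v) \<in> V" and "(tw, \<theta>w) \<in> V"
    and "tv \<le> t0" and "tw \<le> t0"
    and "\<theta>v < \<theta>0" and "\<theta>0 < \<theta>w" and "\<theta>w - \<theta>v \<le> pi"
  shows "circ_dist \<theta>v \<theta>w > thetaR R tv tw \<and> \<not> adjacent R (tv, \<theta>v) (tw, \<theta>w)"
proof -
  have t_pos: "0 < tv" "0 < tw" using assms(3,9,10) by auto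
  have t_small: "tv < R / 2" "tw < R / 2" using assms(5,11,12) by auto
  have "thetaR R tv tv < \<theta>0 - \<theta>v" "thetaR R tw tw < \<theta>w - \<theta>0"
    using diagonal_thetaR_lt_if_notin_sep_zone[of tv \<theta>v R t0 \<theta>0]
      diagonal_thetaR_lt_if_notin_sep_zone[of tw \<theta>w R t0 \<theta>0] assms(8-15) t_pos
    by auto
  then have gap: "thetaR R tv tw < \<bar>\<theta>v - \<theta>w\<bar>"
    using thetaR_le_diagonal_sum[of tv tw R] t_pos t_small assms(13,14) by linarith
  have "\<bar>\<theta>v - \<theta>w\<bar> \<le> pi" using assms(13-15) by linarith
  then have "circ_dist \<theta>v \<theta>w = \<bar>\<theta>v - \<theta>w\<bar>"
    and "R < hyp_dist (R - tv) \<theta>v (R - tw) \<theta>w"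
    using circ_dist_eq_abs hyp_dist_gt_if_angle_gt_thetaR t_pos t_small gap by auto
  then show ?thesis using gap by (simp add: adjacent_def)
qed

end
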